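(* Let $\Omega\subset\mathbb{R}^2$ be a bounded domain and $X\subset\overline{\Omega}$ a finite set with $X\setminus\partial\Omega\subset\mathrm{int}(\mathrm{conv}(X\cap\partial\Omega))$. Then $(\mathcal{P}_X)$ and $(\mathcal{P}_X^* )$ are mutually dual conic quadratic problems, both admit solutions, and $$\mathcal{Z}_X:=\min\mathcal{P}_X=\max\mathcal{P}_X^*<\infty.$$ Moreover, for $(\mathbf{s},\mathbf{q})\in\mathbb{R}^m_+\times\mathbb{R}^m$ and $(\mathbf{u}_1,\mathbf{u}_2,\mathbf{w})\in(\mathbb{R}^n)^3$: $(\mathbf{s},\mathbf{q})$ (completed by some $\mathbf{r}$) solves $(\mathcal{P}_X)$ and $(\mathbf{u}_1,\mathbf{u}_2,\mathbf{w})$ (completed by some $\mathbf{t}_1,\mathbf{t}_2,\mathbf{t}_3$) solves $(\mathcal{P}_X^* )$ if and only if: (i) $\frac14((\mathbf{D}\mathbf{w})_k)^2/l_k+(\mathbf{B}_1\mathbf{u}_1+\mathbf{B}_2\mathbf{u}_2)_k\le l_k$ for every $k$; (ii) $\mathbf{B}_1^\top\mathbf{s}=\mathbf{0}$, $\mathbf{B}_2^\top\mathbf{s}=\mathbf{0}$, $\mathbf{D}^\top\mathbf{q}=\mathbf{f}$; (iii) $\frac14((\mathbf{D}\mathbf{w})_k)^2/l_k+(\mathbf{B}_1\mathbf{u}_1+\mathbf{B}_2\mathbf{u}_2)_k=l_k$ for each $k$ with $s_k\ne0$; (iv) $q_k=\frac12 s_k(\mathbf{D}\mathbf{w})_k/l_k$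 for every $k$.
   Context: Discrete setting: let $\bar n=\#X$, $n=\#(X\setminus\partial\Omega)$, fix an enumeration $\chi:\{1,\dots,n\}\to X\setminus\partial\Omega$, let $m=\bar n(\bar n-1)/2$ and fix an enumeration $k\mapsto\{\chi_-(k),\chi_+(k)\}$ of all unordered pairs of distinct points of $X$. A discrete load is a signed measure $f_X$ supported on $X$; $\mathbf{f}\in\mathbb{R}^n$, $f_i=f_X(\{\chi(i)\})$. $\mathbf{l}\in\mathbb{R}^m$, $l_k=|\chi_+(k)-\chi_-(k)|$. Vectors $\mathbf{u}_1,\mathbf{u}_2,\mathbf{w}\in\mathbb{R}^n$ are identified with $u:X\to\mathbb{R}^2$, $w:X\to\mathbb{R}$ vanishing on $X\cap\partial\Omega$ via $(u_{1;i},u_{2;i})=u(\chi(i))$ (components in a fixed Cartesian basis) and $w_i=w(\chi(i))$. Matrices $\mathbf{B}_1,\mathbf{B}_2,\mathbf{D}\in\mathbb{R}^{m\times n}$ are defined by $(\mathbf{B}_1\mathbf{u}_1+\mathbf{B}_2\mathbf{u}_2)_k=(u(\chi_+(k))-u(\chi_-(k)))\cdot\frac{\chi_+(k)-\chi_-(k)}{l_k}$ and $(\mathbf{D}\mathbf{w})_k=w(\chi_+(k))-w(\chi_-(k))$. Rotated cone $\mathrm{K}=\{(t_1,t_2,t_3)\in\mathbb{R}^3:t_1,t_2\ge0,\ 2t_1t_2\ge t_3^2\}$; $(\mathbf{a},\mathbf{b},\mathbf{c})\in\mathrm{K}^m$ means $(a_k,b_k,c_k)\in\mathrm{K}$ for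 all $k$. $(\mathcal{P}_X)$: $\inf\{\mathbf{l}^\top\mathbf{s}+2\mathbf{l}^\top\mathbf{r}:\mathbf{s},\mathbf{r}\in\mathbb{R}^m_+,\mathbf{q}\in\mathbb{R}^m,\ \mathbf{B}_1^\top\mathbf{s}=\mathbf{0},\mathbf{B}_2^\top\mathbf{s}=\mathbf{0},\mathbf{D}^\top\mathbf{q}=\mathbf{f},\ (\mathbf{r},\mathbf{s},\mathbf{q})\in\mathrm{K}^m\}$. $(\mathcal{P}_X^* )$: $\sup\{\mathbf{f}^\top\mathbf{w}:\mathbf{u}_1,\mathbf{u}_2,\mathbf{w}\in\mathbb{R}^n,\ \mathbf{t}_1,\mathbf{t}_2\in\mathbb{R}^m_+,\mathbf{t}_3\in\mathbb{R}^m,\ \mathbf{t}_2+\mathbf{B}_1\mathbf{u}_1+\mathbf{B}_2\mathbf{u}_2=\mathbf{l},\ \mathbf{t}_3+\mathbf{D}\mathbf{w}=\mathbf{0},\ \mathbf{t}_1=2\mathbf{l},\ (\mathbf{t}_1,\mathbf{t}_2,\mathbf{t}_3)\in\mathrm{K}^m\}$. *)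

theory Defs
  imports "HOL-Analysis.Analysis"
begin

text \<open>Points of the plane are of type real^2. Vectors in R^n / R^m are
  functions nat => real of which only the indices < n (resp. < m) are used.
  chi enumerates the interior points X - frontier Omega (index i < n);
  cm, cp give for k < m the (oriented) pair chi_-(k), chi_+(k).\<close>

definition len :: "(nat \<Rightarrow> real^2) \<Rightarrow> (nat \<Rightarrow> real^2) \<Rightarrow> nat \<Rightarrow> real" where
  "len cm cp k = norm (cp k - cm k)"

definition Dmat :: "(nat \<Rightarrow> real^2) \<Rightarrow> (nat \<Rightarrow> real^2) \<Rightarrow> (nat \<Rightarrow> real^2) \<Rightarrow> nat \<Rightarrow> nat \<Rightarrow> real" where
  "Dmat chi cm cp k i = (if chi i = cp k then 1 else 0) - (if chi i = cm k then 1 else 0)"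

definition B1mat :: "(nat \<Rightarrow> real^2) \<Rightarrow> (nat \<Rightarrow> real^2) \<Rightarrow> (nat \<Rightarrow> real^2) \<Rightarrow> nat \<Rightarrow> nat \<Rightarrow> real" where
  "B1mat chi cm cp k i = Dmat chi cm cp k i * (cp k $ 1 - cm k $ 1) / len cm cp k"

definition B2mat :: "(nat \<Rightarrow> real^2) \<Rightarrow> (nat \<Rightarrow> real^2) \<Rightarrow> (nat \<Rightarrow> real^2) \<Rightarrow> nat \<Rightarrow> nat \<Rightarrow> real" where
  "B2mat chi cm cp k i = Dmat chi cm cp k i * (cp k $ 2 - cm k $ 2) / len cm cp k"

definition mv :: "(nat \<Rightarrow> nat \<Rightarrow> real) \<Rightarrow> nat \<Rightarrow> (nat \<Rightarrow> real) \<Rightarrow> nat \<Rightarrow> real" where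
  "mv M n v k = (\<Sum>i<n. M k i * v i)"

definition tmv :: "(nat \<Rightarrow> nat \<Rightarrow> real) \<Rightarrow> nat \<Rightarrow> (nat \<Rightarrow> real) \<Rightarrow> nat \<Rightarrow> real" where
  "tmv M m s i = (\<Sum>k<m. M k i * s k)"

definition inK :: "real \<Rightarrow> real \<Rightarrow> real \<Rightarrow> bool" where
  "inK t1 t2 t3 \<longleftrightarrow> t1 \<ge> 0 \<and> t2 \<ge> 0 \<and> 2 * t1 * t2 \<ge> t3\<^sup>2"

definition primal_feas :: "nat \<Rightarrow> nat \<Rightarrow> (nat \<Rightarrow> real^2) \<Rightarrow> (nat \<Rightarrow> real^2) \<Rightarrow> (nat \<Rightarrow> real^2)
    \<Rightarrow> (nat \<Rightarrow> real) \<Rightarrow> (nat \<Rightarrow> real) \<Rightarrow> (nat \<Rightarrow> real) \<Rightarrow> (nat \<Rightarrow> real) \<Rightarrow> bool" where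
  "primal_feas n m chi cm cp f s r q \<longleftrightarrow>
     (\<forall>k<m. s k \<ge> 0 \<and> r k \<ge> 0 \<and> inK (r k) (s k) (q k)) \<and>
     (\<forall>i<n. tmv (B1mat chi cm cp) m s i = 0 \<and> tmv (B2mat chi cm cp) m s i = 0 \<and>
            tmv (Dmat chi cm cp) m q i = f i)"

definition primal_obj :: "nat \<Rightarrow> (nat \<Rightarrow> real^2) \<Rightarrow> (nat \<Rightarrow> real^2) \<Rightarrow> (nat \<Rightarrow> real) \<Rightarrow> (nat \<Rightarrow> real) \<Rightarrow> real" where
  "primal_obj m cm cp s r = (\<Sum>k<m. len cm cp k * s k) + 2 * (\<Sum>k<m. len cm cp k * r k)"

definition primal_sol :: "nat \<Rightarrow> nat \<Rightarrow> (nat \<Rightarrow> real^2) \<Rightarrow> (nat \<Rightarrow> real^2) \<Rightarrow> (nat \<Rightarrow> real^2)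
    \<Rightarrow> (nat \<Rightarrow> real) \<Rightarrow> (nat \<Rightarrow> real) \<Rightarrow> (nat \<Rightarrow> real) \<Rightarrow> (nat \<Rightarrow> real) \<Rightarrow> bool" where
  "primal_sol n m chi cm cp f s r q \<longleftrightarrow> primal_feas n m chi cm cp f s r q \<and>
     (\<forall>s' r' q'. primal_feas n m chi cm cp f s' r' q' \<longrightarrow> primal_obj m cm cp s r \<le> primal_obj m cm cp s' r')"

definition dual_feas :: "nat \<Rightarrow> nat \<Rightarrow> (nat \<Rightarrow> real^2) \<Rightarrow> (nat \<Rightarrow> real^2) \<Rightarrow> (nat \<Rightarrow> real^2)
    \<Rightarrow> (nat \<Rightarrow> real) \<Rightarrow> (nat \<Rightarrow> real) \<Rightarrow> (nat \<Rightarrow> real)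
    \<Rightarrow> (nat \<Rightarrow> real) \<Rightarrow> (nat \<Rightarrow> real) \<Rightarrow> (nat \<Rightarrow> real) \<Rightarrow> bool" where
  "dual_feas n m chi cm cp u1 u2 w t1 t2 t3 \<longleftrightarrow>
     (\<forall>k<m. t1 k \<ge> 0 \<and> t2 k \<ge> 0 \<and>
        t2 k + mv (B1mat chi cm cp) n u1 k + mv (B2mat chi cm cp) n u2 k = len cm cp k \<and>
        t3 k + mv (Dmat chi cm cp) n w k = 0 \<and>
        t1 k = 2 * len cm cp k \<and>
        inK (t1 k) (t2 k) (t3 k))"

definition dual_obj :: "nat \<Rightarrow> (nat \<Rightarrow> real) \<Rightarrow> (nat \<Rightarrow> real) \<Rightarrow> real" where
  "dual_obj n f w = (\<Sum>i<n. f i * w i)"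

definition dual_sol :: "nat \<Rightarrow> nat \<Rightarrow> (nat \<Rightarrow> real^2) \<Rightarrow> (nat \<Rightarrow> real^2) \<Rightarrow> (nat \<Rightarrow> real^2)
    \<Rightarrow> (nat \<Rightarrow> real) \<Rightarrow> (nat \<Rightarrow> real) \<Rightarrow> (nat \<Rightarrow> real) \<Rightarrow> (nat \<Rightarrow> real)
    \<Rightarrow> (nat \<Rightarrow> real) \<Rightarrow> (nat \<Rightarrow> real) \<Rightarrow> (nat \<Rightarrow> real) \<Rightarrow> bool" where
  "dual_sol n m chi cm cp f u1 u2 w t1 t2 t3 \<longleftrightarrow> dual_feas n m chi cm cp u1 u2 w t1 t2 t3 \<and>
     (\<forall>u1' u2' w' t1' t2' t3'. dual_feas n m chi cm cp u1' u2' w' t1' t2' t3' \<longrightarrow>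
         dual_obj n f w' \<le> dual_obj n f w)"

end

(* Weak duality holds edge by edge: for primal feasible (s, r, q) and dual feasible (u1, u2, w) the
   duality gap is the sum over the edges k of s_k (l_k - (B1 u1 + B2 u2)_k) + 2 l_k r_k - q_k (D w)_k,
   and each term is nonnegative by the two rotated-cone inequalities and the AM-GM inequality.
   A term vanishes exactly when (iii) and (iv) hold on that edge.  Hence a point satisfying (i)-(iv)
   gives a primal and a dual solution with equal values, and once such a point exists every pair of
   solutions has zero gap and therefore satisfies (i)-(iv).

   Such a point is produced by a logarithmic barrier on the dual.  Every interior node is joined to
   every boundary node, and it lies in the interior of their convex hull; this makes the dual feasible
   set bounded.  For mu > 0 the barrier f.w + mu * sum_k log(-g_k), where g_k <= 0 is constraint (i),
   therefore attains its maximum at a strictly feasible point.  Stationarity there shows that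
   s_k = mu / (-g_k) satisfies the equilibrium equations (ii), and sum_k l_k s_k = m mu + f.w / 2
   keeps these stresses bounded, so a limit point for mu -> 0 satisfies (i)-(iv). *)

theory Submission
  imports Defs
begin

lemma mv_fun_upd_add:
  assumes "i < n"
  shows "mv M n (v(i := v i + t)) k = mv M n v k + t * M k i"
proof -
  have "mv M n (v(i := v i + t)) k = (\<Sum>j<n. M k j * v j + (if j = i then M k i * t else 0))"
    unfolding mv_def by (rule sum.cong) (auto simp: algebra_simps)
  also have "\<dots> = mv M n v k + t * M k i"
    using assms by (simp add: sum.distrib mv_def)
  finally show ?thesis .
qed

lemma mv_single_column:
  assumes "i < n" and "\<And>i'. i' < n \<Longrightarrow> i' \<noteq> i \<Longrightarrow> M k i' = 0"
  shows "mv M n v k = M k i * v i"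
proof -
  have "mv M n v k = (\<Sum>i'<n. if i' = i then M k i * v i else 0)"
    unfolding mv_def by (rule sum.cong) (auto simp: assms(2))
  then show ?thesis using assms(1) by simp
qed

lemma abs_mv_le:
  assumes "\<And>i. i < n \<Longrightarrow> \<bar>v i\<bar> \<le> R"
  shows "\<bar>mv M n v k\<bar> \<le> (\<Sum>i<n. \<bar>M k i\<bar>) * R"
proof -
  have "\<bar>mv M n v k\<bar> \<le> (\<Sum>i<n. \<bar>M k i\<bar> * \<bar>v i\<bar>)"
    unfolding mv_def abs_mult[symmetric] by (rule sum_abs)
  also have "\<dots> \<le> (\<Sum>i<n. \<bar>M k i\<bar> * R)"
    by (intro sum_mono mult_left_mono) (auto simp: assms)
  finally show ?thesis by (simp add: sum_distrib_right)
qed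

lemma sum_tmv_mult: "(\<Sum>i<n. tmv M m s i * v i) = (\<Sum>k<m. s k * mv M n v k)"
  unfolding tmv_def mv_def sum_distrib_left sum_distrib_right
  by (subst sum.swap) (simp add: algebra_simps)

lemma tendsto_mv:
  assumes "\<And>i. i < n \<Longrightarrow> ((\<lambda>j. v j i) \<longlongrightarrow> a i) F"
  shows "((\<lambda>j. mv M n (v j) k) \<longlongrightarrow> mv M n a k) F"
  unfolding mv_def by (intro tendsto_sum tendsto_mult_left) (simp add: assms)

lemma tendsto_tmv:
  assumes "\<And>k. k < m \<Longrightarrow> ((\<lambda>j. s j k) \<longlongrightarrow> a k) F"
  shows "((\<lambda>j. tmv M m (s j) i) \<longlongrightarrow> tmv M m a i) F"
  unfolding tmv_def by (intro tendsto_sum tendsto_mult_left) (simp add: assms)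

lemma rotated_cone_product_le:
  fixes s r q l t d :: real
  assumes "s \<ge> 0" "r \<ge> 0" "q\<^sup>2 \<le> 2 * r * s" "l \<ge> 0" "t \<ge> 0" "d\<^sup>2 \<le> 4 * l * t"
  shows "q * d \<le> s * t + 2 * l * r"
proof -
  have "(q * d)\<^sup>2 \<le> (2 * r * s) * (4 * l * t)"
    unfolding power_mult_distrib using assms by (intro mult_mono) auto
  also have "\<dots> \<le> (s * t + 2 * l * r)\<^sup>2"
    using zero_le_power2[of "s * t - 2 * l * r"] by (simp add: power2_eq_square algebra_simps)
  finally have "\<bar>q * d\<bar> \<le> \<bar>s * t + 2 * l * r\<bar>"
    using abs_le_square_iff by blast
  then show ?thesis using assms by simp
qed

text \<open>In the equality case both cone inequalities and the arithmetic-geometric mean inequality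
  are tight; the identity below writes the gap, multiplied by 4 l s, as a sum of three
  nonnegative terms.\<close>
lemma rotated_cone_product_eq:
  fixes s r q l t d :: real
  assumes "s \<ge> 0" "r \<ge> 0" "q\<^sup>2 \<le> 2 * r * s" "l > 0" "t \<ge> 0" "d\<^sup>2 \<le> 4 * l * t"
    and eq: "q * d = s * t + 2 * l * r"
  shows "q = 1/2 * s * d / l" and "s \<noteq> 0 \<Longrightarrow> t = d\<^sup>2 / (4 * l)"
proof -
  have "0 = (s * t + 2 * l * r - q * d) * (4 * l * s)" using eq by simp
  also have "\<dots> = (4 * l * t - d\<^sup>2) * s\<^sup>2 + 4 * l\<^sup>2 * (2 * r * s - q\<^sup>2) + (s * d - 2 * l * q)\<^sup>2"
    by (simp add: power2_eq_square algebra_simps)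
  finally have sum0: "\<dots> = 0" ..
  have "(4 * l * t - d\<^sup>2) * s\<^sup>2 \<ge> 0" "4 * l\<^sup>2 * (2 * r * s - q\<^sup>2) \<ge> 0"
    using assms by auto
  then have t: "(4 * l * t - d\<^sup>2) * s\<^sup>2 = 0" and q: "(s * d - 2 * l * q)\<^sup>2 = 0"
    using sum0 zero_le_power2[of "s * d - 2 * l * q"] by linarith+
  show "q = 1/2 * s * d / l" using q \<open>l > 0\<close> by (simp add: field_simps)
  show "t = d\<^sup>2 / (4 * l)" if "s \<noteq> 0" using t that \<open>l > 0\<close> by (simp add: field_simps)
qed

lemma bounded_coordinates_imp_convergent_subseq:
  fixes x :: "nat \<Rightarrow> 'i \<Rightarrow> 'a::heine_borel"
  assumes "finite I" and "\<And>i. i \<in> I \<Longrightarrow> bounded (range (\<lambda>j. x j i))"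
  obtains r a where "strict_mono r" and "\<And>i. i \<in> I \<Longrightarrow> (\<lambda>j. x (r j) i) \<longlonglongrightarrow> a i"
proof -
  have "\<exists>r a. strict_mono r \<and> (\<forall>i\<in>I. (\<lambda>j. x (r j) i) \<longlonglongrightarrow> a i)"
    using assms
  proof (induction I rule: finite_induct)
    case empty
    show ?case using strict_mono_id by auto
  next
    case (insert i0 I)
    then obtain r a where r: "strict_mono r" "\<forall>i\<in>I. (\<lambda>j. x (r j) i) \<longlonglongrightarrow> a i"
      by auto
    have "bounded (range (\<lambda>j. x (r j) i0))"
      using insert.prems by (rule bounded_subset) auto
    then obtain b r' where r': "strict_mono r'" "((\<lambda>j. x (r j) i0) \<circ> r') \<longlonglongrightarrow> b"
      using bounded_imp_convergent_subsequence by blast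
    have "(\<lambda>j. x (r (r' j)) i) \<longlonglongrightarrow> (a(i0 := b)) i" if "i \<in> insert i0 I" for i
    proof (cases "i = i0")
      case True
      then show ?thesis using r'(2) by (simp add: o_def)
    next
      case False
      then have "(\<lambda>j. x (r j) i) \<longlonglongrightarrow> a i" using r(2) that by auto
      from LIMSEQ_subseq_LIMSEQ[OF this r'(1)] False show ?thesis by (simp add: o_def)
    qed
    moreover have "strict_mono (r \<circ> r')" using r(1) r'(1) by (rule strict_mono_o)
    ultimately show ?case
      by (intro exI[of _ "r \<circ> r'"] exI[of _ "a(i0 := b)"]) (simp add: o_def)
  qed
  then show thesis using that by blast
qed

lemma log_barrier_stationary:
  fixes E a b :: "nat \<Rightarrow> real" and F \<mu> :: real
  assumes E: "\<And>k. k < m \<Longrightarrow> E k > 0"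
    and max: "\<And>t. (\<forall>k<m. E k - (a k * t + b k * t\<^sup>2) > 0) \<Longrightarrow>
          F * t + \<mu> * (\<Sum>k<m. ln (E k - (a k * t + b k * t\<^sup>2))) \<le> \<mu> * (\<Sum>k<m. ln (E k))"
  shows "F = \<mu> * (\<Sum>k<m. a k / E k)"
proof -
  define e where "e k t = E k - (a k * t + b k * t\<^sup>2)" for k t
  define H where "H t = F * t + \<mu> * (\<Sum>k<m. ln (e k t))" for t
  have "(H has_real_derivative F + \<mu> * (\<Sum>k<m. - a k / E k)) (at 0)"
    unfolding H_def e_def using E
    by (auto intro!: derivative_eq_intros DERIV_sum simp: field_simps)
  moreover have "\<forall>\<^sub>F t in nhds 0. \<forall>k\<in>{..<m}. e k t > 0"
  proof (rule eventually_ball_finite)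
    show "\<forall>k\<in>{..<m}. \<forall>\<^sub>F t in nhds 0. e k t > 0"
    proof
      fix k assume "k \<in> {..<m}"
      have "(e k \<longlongrightarrow> e k 0) (nhds 0)"
        unfolding e_def by (intro tendsto_intros) (simp_all add: filterlim_ident)
      moreover have "e k 0 > 0" using E \<open>k \<in> {..<m}\<close> by (simp add: e_def)
      ultimately show "\<forall>\<^sub>F t in nhds 0. e k t > 0"
        by (rule order_tendstoD(1))
    qed
  qed simp
  then obtain d where "d > 0" and d: "\<And>t. dist t 0 < d \<Longrightarrow> \<forall>k<m. e k t > 0"
    unfolding eventually_nhds_metric by auto
  have "\<forall>t. \<bar>0 - t\<bar> < d \<longrightarrow> H t \<le> H 0"
    using d max unfolding H_def e_def by (simp add: dist_real_def)
  ultimately have "F + \<mu> * (\<Sum>k<m. - a k / E k) = 0"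
    using DERIV_local_max \<open>d > 0\<close> by blast
  then show ?thesis by (simp add: sum_negf)
qed

lemma interior_convex_hull_inner_bound:
  fixes x :: "'a::real_inner"
  assumes "x \<in> interior (convex hull S)"
  obtains \<epsilon> where "\<epsilon> > 0" and "\<And>v c. (\<And>b. b \<in> S \<Longrightarrow> inner v (x - b) \<le> c) \<Longrightarrow> \<epsilon> * norm v \<le> c"
proof -
  obtain \<epsilon> where "\<epsilon> > 0" and ball: "cball x \<epsilon> \<subseteq> convex hull S"
    using assms mem_interior_cball by blast
  have "\<epsilon> * norm v \<le> c" if c: "\<And>b. b \<in> S \<Longrightarrow> inner v (x - b) \<le> c" for v c
  proof (cases "v = 0")
    case True
    have "S \<noteq> {}" using assms by auto
    then show ?thesis using c True by fastforce
  next
    case False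
    define p where "p = x - (\<epsilon> / norm v) *\<^sub>R v"
    have "p \<in> convex hull S"
      using ball False \<open>\<epsilon> > 0\<close> by (auto simp: p_def dist_norm)
    moreover have "S \<subseteq> {y. inner v x - c \<le> inner v y}"
      using c by (force simp: inner_diff_right)
    then have "convex hull S \<subseteq> {y. inner v x - c \<le> inner v y}"
      by (intro hull_minimal convex_halfspace_ge)
    ultimately have "inner v x - c \<le> inner v p" by auto
    also have "inner v p = inner v x - \<epsilon> * norm v"
      using False by (simp add: p_def inner_diff_right power2_norm_eq_inner[symmetric] power2_eq_square)
    finally show ?thesis by simp
  qed
  with \<open>\<epsilon> > 0\<close> show thesis using that by blast
qed

section \<open>Weak duality and the optimality conditions\<close>

lemma len_pos_if_distinct:
  assumes "{cm k, cp k} = {a, b}" and "a \<noteq> b"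
  shows "len cm cp k > 0"
  using assms by (auto simp: len_def doubleton_eq_iff)

locale discrete_problem =
  fixes n m :: nat and chi cm cp :: "nat \<Rightarrow> real^2" and f :: "nat \<Rightarrow> real"
  assumes len_pos: "\<And>k. k < m \<Longrightarrow> len cm cp k > 0"
begin

abbreviation "l \<equiv> len cm cp"
abbreviation "D \<equiv> Dmat chi cm cp"
abbreviation "B1 \<equiv> B1mat chi cm cp"
abbreviation "B2 \<equiv> B2mat chi cm cp"
abbreviation "Dw w k \<equiv> mv D n w k"

definition Bu :: "(nat \<Rightarrow> real) \<Rightarrow> (nat \<Rightarrow> real) \<Rightarrow> nat \<Rightarrow> real" where
  "Bu u1 u2 k = mv B1 n u1 k + mv B2 n u2 k"

definition constraint :: "(nat \<Rightarrow> real) \<Rightarrow> (nat \<Rightarrow> real) \<Rightarrow> (nat \<Rightarrow> real) \<Rightarrow> nat \<Rightarrow> real" where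
  "constraint u1 u2 w k = (Dw w k)\<^sup>2 / (4 * l k) + Bu u1 u2 k - l k"

definition feasible :: "(nat \<Rightarrow> real) \<Rightarrow> (nat \<Rightarrow> real) \<Rightarrow> (nat \<Rightarrow> real) \<Rightarrow> bool" where
  "feasible u1 u2 w \<longleftrightarrow> (\<forall>k<m. constraint u1 u2 w k \<le> 0)"

definition equilibrium :: "(nat \<Rightarrow> real) \<Rightarrow> (nat \<Rightarrow> real) \<Rightarrow> bool" where
  "equilibrium s q \<longleftrightarrow> (\<forall>i<n. tmv B1 m s i = 0 \<and> tmv B2 m s i = 0 \<and> tmv D m q i = f i)"

definition KKT :: "(nat \<Rightarrow> real) \<Rightarrow> (nat \<Rightarrow> real) \<Rightarrow> (nat \<Rightarrow> real) \<Rightarrow> (nat \<Rightarrow> real) \<Rightarrow> (nat \<Rightarrow> real) \<Rightarrow> bool" where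
  "KKT s q u1 u2 w \<longleftrightarrow> (\<forall>k<m. s k \<ge> 0) \<and> feasible u1 u2 w \<and> equilibrium s q \<and>
     (\<forall>k<m. s k \<noteq> 0 \<longrightarrow> constraint u1 u2 w k = 0) \<and> (\<forall>k<m. q k = 1/2 * s k * Dw w k / l k)"

definition edge_gap :: "(nat \<Rightarrow> real) \<Rightarrow> (nat \<Rightarrow> real) \<Rightarrow> (nat \<Rightarrow> real)
    \<Rightarrow> (nat \<Rightarrow> real) \<Rightarrow> (nat \<Rightarrow> real) \<Rightarrow> (nat \<Rightarrow> real) \<Rightarrow> nat \<Rightarrow> real" where
  "edge_gap s r q u1 u2 w k = s k * (l k - Bu u1 u2 k) + 2 * l k * r k - q k * Dw w k"

lemma constraint_nonpos_iff:
  "k < m \<Longrightarrow> constraint u1 u2 w k \<le> 0 \<longleftrightarrow> (Dw w k)\<^sup>2 \<le> 4 * l k * (l k - Bu u1 u2 k)"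
  using len_pos[of k] by (simp add: constraint_def field_simps)

lemma constraint_eq_0_iff:
  "k < m \<Longrightarrow> constraint u1 u2 w k = 0 \<longleftrightarrow> l k - Bu u1 u2 k = (Dw w k)\<^sup>2 / (4 * l k)"
  by (auto simp: constraint_def)

lemma slack_nonneg:
  assumes "k < m" and "constraint u1 u2 w k \<le> 0"
  shows "l k - Bu u1 u2 k \<ge> 0"
proof -
  have "0 \<le> 4 * l k * (l k - Bu u1 u2 k)"
    using constraint_nonpos_iff[OF assms(1)] assms(2) zero_le_power2[of "Dw w k"] by (meson order_trans)
  then show ?thesis using len_pos[OF assms(1)] by (simp add: zero_le_mult_iff)
qed

lemma inK_dual_iff:
  assumes "k < m"
  shows "inK (2 * l k) (l k - Bu u1 u2 k) (- Dw w k) \<longleftrightarrow> constraint u1 u2 w k \<le> 0"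
proof -
  have "inK (2 * l k) (l k - Bu u1 u2 k) (- Dw w k) \<longleftrightarrow>
      0 \<le> l k - Bu u1 u2 k \<and> (Dw w k)\<^sup>2 \<le> 4 * l k * (l k - Bu u1 u2 k)"
    using len_pos[OF assms] by (simp add: inK_def)
  then show ?thesis
    using slack_nonneg[OF assms] constraint_nonpos_iff[OF assms] by blast
qed

lemma dual_feas_iff:
  "dual_feas n m chi cm cp u1 u2 w t1 t2 t3 \<longleftrightarrow> feasible u1 u2 w \<and>
     (\<forall>k<m. t1 k = 2 * l k \<and> t2 k = l k - Bu u1 u2 k \<and> t3 k = - Dw w k)"
proof -
  have "dual_feas n m chi cm cp u1 u2 w t1 t2 t3 \<longleftrightarrow> (\<forall>k<m. t1 k = 2 * l k \<and>
      t2 k = l k - Bu u1 u2 k \<and> t3 k = - Dw w k \<and> inK (t1 k) (t2 k) (t3 k))"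
    unfolding dual_feas_def Bu_def by (auto simp: inK_def)
  also have "\<dots> \<longleftrightarrow> (\<forall>k<m. t1 k = 2 * l k \<and>
      t2 k = l k - Bu u1 u2 k \<and> t3 k = - Dw w k \<and> constraint u1 u2 w k \<le> 0)"
    using inK_dual_iff by auto
  finally show ?thesis
    by (auto simp: feasible_def)
qed

lemma dual_sol_iff:
  "dual_sol n m chi cm cp f u1 u2 w t1 t2 t3 \<longleftrightarrow> dual_feas n m chi cm cp u1 u2 w t1 t2 t3 \<and>
     (\<forall>u1' u2' w'. feasible u1' u2' w' \<longrightarrow> dual_obj n f w' \<le> dual_obj n f w)"
proof -
  have "feasible u1' u2' w' \<longleftrightarrow> (\<exists>t1' t2' t3'. dual_feas n m chi cm cp u1' u2' w' t1' t2' t3')"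
    for u1' u2' w'
  proof
    assume "feasible u1' u2' w'"
    then show "\<exists>t1' t2' t3'. dual_feas n m chi cm cp u1' u2' w' t1' t2' t3'"
      by (intro exI[of _ "\<lambda>k. 2 * l k"] exI[of _ "\<lambda>k. l k - Bu u1' u2' k"] exI[of _ "\<lambda>k. - Dw w' k"])
        (simp add: dual_feas_iff)
  qed (auto simp: dual_feas_iff)
  then show ?thesis
    unfolding dual_sol_def by meson
qed

lemma dual_obj_eq_sum:
  assumes "equilibrium s q"
  shows "dual_obj n f w = (\<Sum>k<m. q k * Dw w k)"
proof -
  have "dual_obj n f w = (\<Sum>i<n. tmv D m q i * w i)"
    using assms unfolding dual_obj_def equilibrium_def by (intro sum.cong) auto
  also have "\<dots> = (\<Sum>k<m. q k * Dw w k)"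
    by (rule sum_tmv_mult)
  finally show ?thesis .
qed

lemma sum_stress_Bu_eq_0:
  assumes "equilibrium s q"
  shows "(\<Sum>k<m. s k * Bu u1 u2 k) = 0"
proof -
  have "(\<Sum>k<m. s k * Bu u1 u2 k) = (\<Sum>i<n. tmv B1 m s i * u1 i) + (\<Sum>i<n. tmv B2 m s i * u2 i)"
    by (simp add: Bu_def sum_tmv_mult distrib_left sum.distrib)
  also have "\<dots> = 0"
    using assms unfolding equilibrium_def by simp
  finally show ?thesis .
qed

lemma duality_gap_eq:
  assumes "equilibrium s q"
  shows "primal_obj m cm cp s r - dual_obj n f w = (\<Sum>k<m. edge_gap s r q u1 u2 w k)"
  using dual_obj_eq_sum[OF assms] sum_stress_Bu_eq_0[OF assms]
  by (simp add: primal_obj_def edge_gap_def sum.distrib sum_subtractf sum_distrib_left algebra_simps)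

lemma primal_feas_cone:
  assumes "primal_feas n m chi cm cp f s r q" "k < m"
  shows "s k \<ge> 0" "r k \<ge> 0" "(q k)\<^sup>2 \<le> 2 * r k * s k"
  using assms by (auto simp: primal_feas_def inK_def)

lemma feasible_cone:
  assumes "feasible u1 u2 w" "k < m"
  shows "l k > 0" "l k - Bu u1 u2 k \<ge> 0" "(Dw w k)\<^sup>2 \<le> 4 * l k * (l k - Bu u1 u2 k)"
  using assms len_pos slack_nonneg constraint_nonpos_iff by (auto simp: feasible_def)

lemma edge_gap_nonneg:
  assumes "primal_feas n m chi cm cp f s r q" "feasible u1 u2 w" "k < m"
  shows "edge_gap s r q u1 u2 w k \<ge> 0"
  using rotated_cone_product_le[OF primal_feas_cone[OF assms(1,3)] _ feasible_cone(2,3)[OF assms(2,3)]]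
    feasible_cone(1)[OF assms(2,3)]
  by (simp add: edge_gap_def)

lemma weak_duality:
  assumes "primal_feas n m chi cm cp f s r q" "feasible u1 u2 w"
  shows "dual_obj n f w \<le> primal_obj m cm cp s r"
proof -
  have "equilibrium s q" using assms(1) by (simp add: primal_feas_def equilibrium_def)
  moreover have "(\<Sum>k<m. edge_gap s r q u1 u2 w k) \<ge> 0"
    by (auto intro!: sum_nonneg edge_gap_nonneg[OF assms])
  ultimately show ?thesis
    using duality_gap_eq[of s q r w u1 u2] by simp
qed

lemma edge_gap_eq_0_imp:
  assumes "primal_feas n m chi cm cp f s r q" "feasible u1 u2 w" "k < m"
    and "edge_gap s r q u1 u2 w k = 0"
  shows "q k = 1/2 * s k * Dw w k / l k" and "s k \<noteq> 0 \<Longrightarrow> constraint u1 u2 w k = 0"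
proof -
  note cone = rotated_cone_product_eq[OF primal_feas_cone[OF assms(1,3)] feasible_cone[OF assms(2,3)]]
  have eq: "q k * Dw w k = s k * (l k - Bu u1 u2 k) + 2 * l k * r k"
    using assms(4) by (simp add: edge_gap_def)
  show "q k = 1/2 * s k * Dw w k / l k" using cone(1)[OF eq] .
  show "constraint u1 u2 w k = 0" if "s k \<noteq> 0"
    using cone(2)[OF eq that] constraint_eq_0_iff[OF assms(3)] by simp
qed

lemma zero_gap_imp_KKT:
  assumes primal: "primal_feas n m chi cm cp f s r q" and dual: "feasible u1 u2 w"
    and gap: "primal_obj m cm cp s r = dual_obj n f w"
  shows "KKT s q u1 u2 w"
proof -
  have eq: "equilibrium s q" using primal by (simp add: primal_feas_def equilibrium_def)
  have "(\<Sum>k<m. edge_gap s r q u1 u2 w k) = 0"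
    using duality_gap_eq[OF eq] gap by simp
  then have zero: "edge_gap s r q u1 u2 w k = 0" if "k < m" for k
    using edge_gap_nonneg[OF primal dual] that by (subst (asm) sum_nonneg_eq_0_iff) auto
  show ?thesis
    unfolding KKT_def
  proof (intro conjI allI impI)
    show "feasible u1 u2 w" by (fact dual)
    show "equilibrium s q" by (fact eq)
  next
    fix k assume k: "k < m"
    show "s k \<ge> 0" by (rule primal_feas_cone(1)[OF primal k])
    note gap_k = edge_gap_eq_0_imp[OF primal dual k zero[OF k]]
    show "q k = 1/2 * s k * Dw w k / l k" by (fact gap_k(1))
    show "constraint u1 u2 w k = 0" if "s k \<noteq> 0" using gap_k(2) that by blast
  qed
qed

text \<open>For an edge with s k = 0, condition (iv) forces q k = 0 and division by zero makes
  the cone variable r k = 0.\<close>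
definition cone_witness :: "(nat \<Rightarrow> real) \<Rightarrow> (nat \<Rightarrow> real) \<Rightarrow> nat \<Rightarrow> real" where
  "cone_witness s q k = (q k)\<^sup>2 / (2 * s k)"

lemma KKT_imp_primal_feas:
  assumes "KKT s q u1 u2 w"
  shows "primal_feas n m chi cm cp f s (cone_witness s q) q"
  unfolding primal_feas_def
proof (intro conjI allI impI)
  fix k assume k: "k < m"
  show "s k \<ge> 0" using assms k by (simp add: KKT_def)
  then show "cone_witness s q k \<ge> 0" by (simp add: cone_witness_def)
  show "inK (cone_witness s q k) (s k) (q k)"
  proof (cases "s k = 0")
    case True
    then show ?thesis using assms k by (simp add: KKT_def cone_witness_def inK_def)
  next
    case False
    then show ?thesis using \<open>s k \<ge> 0\<close> by (simp add: cone_witness_def inK_def)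
  qed
qed (use assms in \<open>auto simp: KKT_def equilibrium_def\<close>)

lemma KKT_imp_zero_gap:
  assumes "KKT s q u1 u2 w"
  shows "primal_obj m cm cp s (cone_witness s q) = dual_obj n f w"
proof -
  have "edge_gap s (cone_witness s q) q u1 u2 w k = 0" if k: "k < m" for k
  proof (cases "s k = 0")
    case True
    then show ?thesis using assms k by (simp add: KKT_def edge_gap_def cone_witness_def)
  next
    case False
    then have slack: "l k - Bu u1 u2 k = (Dw w k)\<^sup>2 / (4 * l k)"
      and q: "q k = 1/2 * s k * Dw w k / l k"
      using assms k constraint_eq_0_iff[OF k] by (auto simp: KKT_def)
    show ?thesis
      unfolding edge_gap_def cone_witness_def slack q using False len_pos[OF k]
      by (simp add: field_simps power2_eq_square)
  qed
  moreover have "equilibrium s q" using assms by (simp add: KKT_def)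
  ultimately show ?thesis
    using duality_gap_eq[of s q "cone_witness s q" w u1 u2] by simp
qed

lemma KKT_imp_optimal:
  assumes "KKT s q u1 u2 w"
  shows "primal_sol n m chi cm cp f s (cone_witness s q) q"
    and "dual_sol n m chi cm cp f u1 u2 w (\<lambda>k. 2 * l k) (\<lambda>k. l k - Bu u1 u2 k) (\<lambda>k. - Dw w k)"
proof -
  have primal: "primal_feas n m chi cm cp f s (cone_witness s q) q"
    using KKT_imp_primal_feas[OF assms] .
  have dual: "feasible u1 u2 w" using assms by (simp add: KKT_def)
  note gap = KKT_imp_zero_gap[OF assms]
  show "primal_sol n m chi cm cp f s (cone_witness s q) q"
    unfolding primal_sol_def using primal weak_duality[OF _ dual] gap by auto
  show "dual_sol n m chi cm cp f u1 u2 w (\<lambda>k. 2 * l k) (\<lambda>k. l k - Bu u1 u2 k) (\<lambda>k. - Dw w k)"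
    unfolding dual_sol_iff dual_feas_iff using dual weak_duality[OF primal] gap by auto
qed

lemma solutions_iff_KKT:
  assumes "KKT s0 q0 u10 u20 w0"
  shows "(\<exists>r. primal_sol n m chi cm cp f s r q) \<and> (\<exists>t1 t2 t3. dual_sol n m chi cm cp f u1 u2 w t1 t2 t3)
    \<longleftrightarrow> KKT s q u1 u2 w"
proof
  assume "KKT s q u1 u2 w"
  then show "(\<exists>r. primal_sol n m chi cm cp f s r q) \<and> (\<exists>t1 t2 t3. dual_sol n m chi cm cp f u1 u2 w t1 t2 t3)"
    using KKT_imp_optimal by blast
next
  assume "(\<exists>r. primal_sol n m chi cm cp f s r q) \<and> (\<exists>t1 t2 t3. dual_sol n m chi cm cp f u1 u2 w t1 t2 t3)"
  then obtain r t1 t2 t3 where primal: "primal_sol n m chi cm cp f s r q"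
    and dual: "dual_sol n m chi cm cp f u1 u2 w t1 t2 t3" by blast
  have primal_feas: "primal_feas n m chi cm cp f s r q" and dual_feas: "feasible u1 u2 w"
    using primal dual by (auto simp: primal_sol_def dual_sol_iff dual_feas_iff)
  have "primal_obj m cm cp s r \<le> primal_obj m cm cp s0 (cone_witness s0 q0)"
    using primal KKT_imp_primal_feas[OF assms] unfolding primal_sol_def by blast
  also have "\<dots> = dual_obj n f w0" by (rule KKT_imp_zero_gap[OF assms])
  also have "\<dots> \<le> dual_obj n f w"
    using dual assms unfolding dual_sol_iff KKT_def by blast
  finally have "primal_obj m cm cp s r \<le> dual_obj n f w" .
  then have "primal_obj m cm cp s r = dual_obj n f w"
    using weak_duality[OF primal_feas dual_feas] by linarith
  then show "KKT s q u1 u2 w"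
    by (rule zero_gap_imp_KKT[OF primal_feas dual_feas])
qed

lemma KKT_iff_conditions:
  assumes "\<forall>k<m. s k \<ge> 0"
  shows "KKT s q u1 u2 w \<longleftrightarrow>
    (\<forall>k<m. (1/4) * (Dw w k)\<^sup>2 / l k + (mv B1 n u1 k + mv B2 n u2 k) \<le> l k) \<and>
    (\<forall>i<n. tmv B1 m s i = 0 \<and> tmv B2 m s i = 0 \<and> tmv D m q i = f i) \<and>
    (\<forall>k<m. s k \<noteq> 0 \<longrightarrow> (1/4) * (Dw w k)\<^sup>2 / l k + (mv B1 n u1 k + mv B2 n u2 k) = l k) \<and>
    (\<forall>k<m. q k = (1/2) * s k * Dw w k / l k)"
proof -
  have "constraint u1 u2 w k = (1/4) * (Dw w k)\<^sup>2 / l k + (mv B1 n u1 k + mv B2 n u2 k) - l k" for k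
    by (simp add: constraint_def Bu_def)
  then show ?thesis
    using assms by (simp add: KKT_def feasible_def equilibrium_def)
qed

section \<open>Boundedness of the dual feasible set\<close>

lemma boundary_edge_row:
  assumes inj: "inj_on chi {..<n}" and i: "i < n" and b: "b \<notin> chi ` {..<n}"
    and k: "{cm k, cp k} = {chi i, b}"
  shows "l k = norm (chi i - b)"
    and "Bu u1 u2 k = inner (vector [u1 i, u2 i]) (chi i - b) / norm (chi i - b)"
    and "(Dw w k)\<^sup>2 = (w i)\<^sup>2"
proof -
  let ?x = "chi i"
  have "?x \<noteq> b" using b i by auto
  have "chi i' \<noteq> cm k \<and> chi i' \<noteq> cp k" if "i' < n" "i' \<noteq> i" for i'
  proof -
    have "chi i' \<noteq> ?x" "chi i' \<noteq> b"
      using inj_onD[OF inj, of i' i] b that i by auto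
    moreover have "cm k \<in> {?x, b}" "cp k \<in> {?x, b}" using k by blast+
    ultimately show ?thesis by auto
  qed
  then have zero: "D k i' = 0" "B1 k i' = 0" "B2 k i' = 0" if "i' < n" "i' \<noteq> i" for i'
    using that by (simp_all add: B1mat_def B2mat_def Dmat_def)
  have row: "(D k i = 1 \<or> D k i = -1) \<and> l k = norm (?x - b) \<and>
      B1 k i = (?x - b)$1 / norm (?x - b) \<and> B2 k i = (?x - b)$2 / norm (?x - b)"
  proof -
    from k consider "cm k = b" "cp k = ?x" | "cm k = ?x" "cp k = b"
      by (auto simp: doubleton_eq_iff)
    then show ?thesis
    proof cases
      case 1
      then show ?thesis using \<open>?x \<noteq> b\<close> by (simp add: B1mat_def B2mat_def Dmat_def len_def)
    next
      case 2
      then show ?thesis using \<open>?x \<noteq> b\<close>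
        by (simp add: B1mat_def B2mat_def Dmat_def len_def norm_minus_commute minus_divide_left)
    qed
  qed
  show "l k = norm (?x - b)" using row by simp
  have "Bu u1 u2 k = B1 k i * u1 i + B2 k i * u2 i"
    unfolding Bu_def using mv_single_column[OF i] zero by simp
  then show "Bu u1 u2 k = inner (vector [u1 i, u2 i]) (?x - b) / norm (?x - b)"
    using row by (simp add: inner_vec_def sum_2 add_divide_distrib mult.commute)
  have "Dw w k = D k i * w i"
    using mv_single_column[OF i] zero by simp
  then show "(Dw w k)\<^sup>2 = (w i)\<^sup>2"
    using row by auto
qed

text \<open>Joining an interior node x to every boundary node b, constraint (i) gives
  (w i)^2 \<le> 4 (|x - b|^2 - v \<bullet> (x - b)) with v = (u1 i, u2 i).  Hence v \<bullet> (x - b) is bounded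
  for all b, which bounds v because x is interior to their convex hull, and then w i is bounded.\<close>
lemma interior_node_bound:
  assumes inj: "inj_on chi {..<n}" and i: "i < n"
    and B: "bounded B" "B \<inter> chi ` {..<n} = {}" "chi i \<in> interior (convex hull B)"
    and edges: "\<And>b. b \<in> B \<Longrightarrow> \<exists>k<m. {cm k, cp k} = {chi i, b}"
  obtains R where "\<And>u1 u2 w. feasible u1 u2 w \<Longrightarrow> \<bar>u1 i\<bar> \<le> R \<and> \<bar>u2 i\<bar> \<le> R \<and> \<bar>w i\<bar> \<le> R"
proof -
  let ?x = "chi i"
  obtain M where M: "\<And>b. b \<in> B \<Longrightarrow> norm b \<le> M"
    using B(1) bounded_iff by blast
  define d where "d = norm ?x + M"
  have dist_le: "norm (?x - b) \<le> d" if "b \<in> B" for b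
    using norm_triangle_ineq4[of ?x b] M[OF that] by (simp add: d_def)
  obtain \<epsilon> where "\<epsilon> > 0"
    and hull: "\<And>v c. (\<And>b. b \<in> B \<Longrightarrow> inner v (?x - b) \<le> c) \<Longrightarrow> \<epsilon> * norm v \<le> c"
    using interior_convex_hull_inner_bound[OF B(3)] by blast
  obtain b0 where "b0 \<in> B" using B(3) by fastforce
  define V where "V = d\<^sup>2 / \<epsilon>"
  define R where "R = max V (sqrt (4 * (d\<^sup>2 + d * V)))"
  have "\<bar>u1 i\<bar> \<le> R \<and> \<bar>u2 i\<bar> \<le> R \<and> \<bar>w i\<bar> \<le> R" if feasible: "feasible u1 u2 w" for u1 u2 w
  proof -
    define v :: "real^2" where "v = vector [u1 i, u2 i]"
    have key: "(w i)\<^sup>2 \<le> 4 * ((norm (?x - b))\<^sup>2 - inner v (?x - b))" if b: "b \<in> B" for b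
    proof -
      obtain k where k: "k < m" "{cm k, cp k} = {?x, b}" using edges[OF b] by blast
      have "b \<notin> chi ` {..<n}" using B(2) b by blast
      note row = boundary_edge_row[OF inj i this k(2)]
      have "(Dw w k)\<^sup>2 \<le> 4 * l k * (l k - Bu u1 u2 k)"
        using feasible k(1) constraint_nonpos_iff by (simp add: feasible_def)
      moreover have "norm (?x - b) > 0" using row(1) len_pos[OF k(1)] by simp
      ultimately show ?thesis
        unfolding row v_def by (simp add: field_simps power2_eq_square)
    qed
    have "inner v (?x - b) \<le> d\<^sup>2" if "b \<in> B" for b
      using key[OF that] power_mono[OF dist_le[OF that] norm_ge_zero, of 2] zero_le_power2[of "w i"]
      by (smt (verit))
    then have "norm v \<le> V"
      using hull \<open>\<epsilon> > 0\<close> by (simp add: V_def pos_le_divide_eq mult.commute)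
    moreover have "\<bar>u1 i\<bar> \<le> norm v" "\<bar>u2 i\<bar> \<le> norm v"
      using component_le_norm_cart[of v 1] component_le_norm_cart[of v 2] by (simp_all add: v_def)
    moreover have "(w i)\<^sup>2 \<le> 4 * (d\<^sup>2 + d * V)"
    proof -
      have "- inner v (?x - b0) \<le> norm v * norm (?x - b0)"
        using norm_cauchy_schwarz[of "-v" "?x - b0"] by simp
      also have "\<dots> \<le> V * d"
        using \<open>norm v \<le> V\<close> dist_le[OF \<open>b0 \<in> B\<close>] by (intro mult_mono) (auto intro: order_trans[OF norm_ge_zero])
      finally show ?thesis
        using key[OF \<open>b0 \<in> B\<close>] dist_le[OF \<open>b0 \<in> B\<close>] power_mono[of "norm (?x - b0)" d 2]
        by (simp add: algebra_simps)
    qed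
    then have "\<bar>w i\<bar> \<le> sqrt (4 * (d\<^sup>2 + d * V))"
      using real_sqrt_le_mono real_sqrt_abs by metis
    ultimately show ?thesis
      unfolding R_def by (meson le_max_iff_disj order_trans)
  qed
  then show thesis using that by blast
qed

lemma feasible_bounded_if_interior:
  assumes inj: "inj_on chi {..<n}" and B: "finite B" "B \<inter> chi ` {..<n} = {}"
    and interior: "chi ` {..<n} \<subseteq> interior (convex hull B)"
    and edges: "\<And>i b. i < n \<Longrightarrow> b \<in> B \<Longrightarrow> \<exists>k<m. {cm k, cp k} = {chi i, b}"
  shows "\<exists>R. \<forall>u1 u2 w. feasible u1 u2 w \<longrightarrow> (\<forall>i<n. \<bar>u1 i\<bar> \<le> R \<and> \<bar>u2 i\<bar> \<le> R \<and> \<bar>w i\<bar> \<le> R)"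
proof -
  have "\<exists>R. \<forall>u1 u2 w. feasible u1 u2 w \<longrightarrow> \<bar>u1 i\<bar> \<le> R \<and> \<bar>u2 i\<bar> \<le> R \<and> \<bar>w i\<bar> \<le> R"
    if "i < n" for i
    using interior_node_bound[OF inj that finite_imp_bounded[OF B(1)] B(2)] interior edges that
    by (metis image_subset_iff lessThan_iff)
  then obtain R where R: "\<And>i u1 u2 w. i < n \<Longrightarrow> feasible u1 u2 w \<Longrightarrow>
      \<bar>u1 i\<bar> \<le> R i \<and> \<bar>u2 i\<bar> \<le> R i \<and> \<bar>w i\<bar> \<le> R i"
    by metis
  have "R i \<le> (\<Sum>i<n. \<bar>R i\<bar>)" if "i < n" for i
    using member_le_sum[of i "{..<n}" "\<lambda>i. \<bar>R i\<bar>"] that by simp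
  then show ?thesis
    using R by (meson order_trans)
qed

section \<open>The logarithmic barrier and the central path\<close>

definition strictly_feasible :: "(nat \<Rightarrow> real) \<Rightarrow> (nat \<Rightarrow> real) \<Rightarrow> (nat \<Rightarrow> real) \<Rightarrow> bool" where
  "strictly_feasible u1 u2 w \<longleftrightarrow> (\<forall>k<m. constraint u1 u2 w k < 0)"

definition barrier :: "real \<Rightarrow> (nat \<Rightarrow> real) \<Rightarrow> (nat \<Rightarrow> real) \<Rightarrow> (nat \<Rightarrow> real) \<Rightarrow> real" where
  "barrier \<mu> u1 u2 w = dual_obj n f w + \<mu> * (\<Sum>k<m. ln (- constraint u1 u2 w k))"

lemma strictly_feasible_imp_feasible: "strictly_feasible u1 u2 w \<Longrightarrow> feasible u1 u2 w"
  by (simp add: strictly_feasible_def feasible_def less_imp_le)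

lemma strictly_feasible_zero: "strictly_feasible (\<lambda>_. 0) (\<lambda>_. 0) (\<lambda>_. 0)"
  using len_pos by (simp add: strictly_feasible_def constraint_def Bu_def mv_def)

lemma tendsto_constraint:
  assumes "k < m" and "\<And>i. i < n \<Longrightarrow> (\<lambda>j. U1 j i) \<longlonglongrightarrow> a1 i" "\<And>i. i < n \<Longrightarrow> (\<lambda>j. U2 j i) \<longlonglongrightarrow> a2 i"
    "\<And>i. i < n \<Longrightarrow> (\<lambda>j. W j i) \<longlonglongrightarrow> aw i"
  shows "(\<lambda>j. constraint (U1 j) (U2 j) (W j) k) \<longlonglongrightarrow> constraint a1 a2 aw k"
  unfolding constraint_def Bu_def
  by (intro tendsto_intros tendsto_mv assms(2-4)) (use len_pos[OF assms(1)] in simp_all)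

lemma tendsto_dual_obj:
  assumes "\<And>i. i < n \<Longrightarrow> (\<lambda>j. W j i) \<longlonglongrightarrow> aw i"
  shows "(\<lambda>j. dual_obj n f (W j)) \<longlonglongrightarrow> dual_obj n f aw"
  unfolding dual_obj_def by (intro tendsto_sum tendsto_mult_left) (simp add: assms)

lemma tendsto_barrier:
  assumes "\<And>i. i < n \<Longrightarrow> (\<lambda>j. U1 j i) \<longlonglongrightarrow> a1 i" "\<And>i. i < n \<Longrightarrow> (\<lambda>j. U2 j i) \<longlonglongrightarrow> a2 i"
    "\<And>i. i < n \<Longrightarrow> (\<lambda>j. W j i) \<longlonglongrightarrow> aw i"
    and "strictly_feasible a1 a2 aw"
  shows "(\<lambda>j. barrier \<mu> (U1 j) (U2 j) (W j)) \<longlonglongrightarrow> barrier \<mu> a1 a2 aw"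
  unfolding barrier_def using assms(4)
  by (intro tendsto_intros tendsto_dual_obj tendsto_constraint assms(1-3))
    (auto simp: strictly_feasible_def)

lemma constraint_update_w:
  assumes "i < n" "k < m"
  shows "- constraint u1 u2 (w(i := w i + t)) k =
    - constraint u1 u2 w k - (Dw w k * D k i / (2 * l k) * t + (D k i)\<^sup>2 / (4 * l k) * t\<^sup>2)"
  using len_pos[OF assms(2)] unfolding constraint_def mv_fun_upd_add[OF assms(1)]
  by (simp add: field_simps power2_eq_square)

lemma constraint_update_u1:
  assumes "i < n"
  shows "- constraint (u1(i := u1 i + t)) u2 w k = - constraint u1 u2 w k - (B1 k i * t + 0 * t\<^sup>2)"
  unfolding constraint_def Bu_def mv_fun_upd_add[OF assms] by (simp add: algebra_simps)

lemma constraint_update_u2: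
  assumes "i < n"
  shows "- constraint u1 (u2(i := u2 i + t)) w k = - constraint u1 u2 w k - (B2 k i * t + 0 * t\<^sup>2)"
  unfolding constraint_def Bu_def mv_fun_upd_add[OF assms] by (simp add: algebra_simps)

lemma dual_obj_update:
  assumes "i < n"
  shows "dual_obj n f (w(i := w i + t)) = dual_obj n f w + f i * t"
  using mv_fun_upd_add[OF assms, of "\<lambda>_ i. f i" w t 0]
  by (simp add: dual_obj_def mv_def mult.commute)

lemma barrier_max_stationary:
  assumes max: "\<And>v1 v2 z. strictly_feasible v1 v2 z \<Longrightarrow> barrier \<mu> v1 v2 z \<le> barrier \<mu> a1 a2 aw"
    and sf: "strictly_feasible a1 a2 aw"
    and perturb: "\<And>t k. k < m \<Longrightarrow> - constraint (U t) (V t) (W t) k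
        = - constraint a1 a2 aw k - (\<alpha> k * t + \<beta> k * t\<^sup>2)"
    and obj: "\<And>t. dual_obj n f (W t) = dual_obj n f aw + F * t"
  shows "F = \<mu> * (\<Sum>k<m. \<alpha> k / (- constraint a1 a2 aw k))"
proof (rule log_barrier_stationary)
  show "- constraint a1 a2 aw k > 0" if "k < m" for k
    using sf that by (simp add: strictly_feasible_def)
  fix t
  assume pos: "\<forall>k<m. - constraint a1 a2 aw k - (\<alpha> k * t + \<beta> k * t\<^sup>2) > 0"
  have "constraint (U t) (V t) (W t) k < 0" if "k < m" for k
    using pos[rule_format, OF that] perturb[OF that, of t] by linarith
  then have "strictly_feasible (U t) (V t) (W t)"
    by (simp add: strictly_feasible_def)
  then have "barrier \<mu> (U t) (V t) (W t) \<le> barrier \<mu> a1 a2 aw" by (rule max)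
  then show "F * t + \<mu> * (\<Sum>k<m. ln (- constraint a1 a2 aw k - (\<alpha> k * t + \<beta> k * t\<^sup>2)))
      \<le> \<mu> * (\<Sum>k<m. ln (- constraint a1 a2 aw k))"
    using perturb by (simp add: barrier_def obj)
qed

definition central :: "real \<Rightarrow> (nat \<Rightarrow> real) \<Rightarrow> (nat \<Rightarrow> real)
    \<Rightarrow> (nat \<Rightarrow> real) \<Rightarrow> (nat \<Rightarrow> real) \<Rightarrow> (nat \<Rightarrow> real) \<Rightarrow> bool" where
  "central \<mu> s q u1 u2 w \<longleftrightarrow> feasible u1 u2 w \<and> equilibrium s q \<and>
     (\<forall>k<m. s k > 0 \<and> s k * (- constraint u1 u2 w k) = \<mu> \<and> q k = 1/2 * s k * Dw w k / l k)"

text \<open>Stationarity in the directions u1, u2 and w gives the three equilibrium equations.\<close>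
lemma barrier_max_imp_central:
  assumes "\<mu> > 0" and sf: "strictly_feasible a1 a2 aw"
    and max: "\<And>v1 v2 z. strictly_feasible v1 v2 z \<Longrightarrow> barrier \<mu> v1 v2 z \<le> barrier \<mu> a1 a2 aw"
  defines "s \<equiv> \<lambda>k. \<mu> / (- constraint a1 a2 aw k)"
  defines "q \<equiv> \<lambda>k. 1/2 * s k * Dw aw k / l k"
  shows "central \<mu> s q a1 a2 aw"
proof -
  note stationary = barrier_max_stationary[OF max sf]
  have "tmv D m q i = f i" if i: "i < n" for i
  proof -
    have "f i = \<mu> * (\<Sum>k<m. Dw aw k * D k i / (2 * l k) / (- constraint a1 a2 aw k))"
      by (rule stationary[where U = "\<lambda>_. a1" and V = "\<lambda>_. a2" and W = "\<lambda>t. aw(i := aw i + t)"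
          and \<beta> = "\<lambda>k. (D k i)\<^sup>2 / (4 * l k)"])
        (simp_all add: constraint_update_w[OF i] dual_obj_update[OF i])
    then show ?thesis
      by (simp add: tmv_def q_def s_def sum_distrib_left field_simps)
  qed
  moreover have "tmv B1 m s i = 0" if i: "i < n" for i
  proof -
    have "0 = \<mu> * (\<Sum>k<m. B1 k i / (- constraint a1 a2 aw k))"
      by (rule stationary[where U = "\<lambda>t. a1(i := a1 i + t)" and V = "\<lambda>_. a2" and W = "\<lambda>_. aw"
          and \<beta> = "\<lambda>_. 0"])
        (simp_all add: constraint_update_u1[OF i])
    then show ?thesis
      by (simp add: tmv_def s_def sum_distrib_left field_simps)
  qed
  moreover have "tmv B2 m s i = 0" if i: "i < n" for i
  proof -
    have "0 = \<mu> * (\<Sum>k<m. B2 k i / (- constraint a1 a2 aw k))"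
      by (rule stationary[where U = "\<lambda>_. a1" and V = "\<lambda>t. a2(i := a2 i + t)" and W = "\<lambda>_. aw"
          and \<beta> = "\<lambda>_. 0"])
        (simp_all add: constraint_update_u2[OF i])
    then show ?thesis
      by (simp add: tmv_def s_def sum_distrib_left field_simps)
  qed
  ultimately have "equilibrium s q" by (simp add: equilibrium_def)
  moreover have "s k > 0 \<and> s k * (- constraint a1 a2 aw k) = \<mu>" if "k < m" for k
    using sf that \<open>\<mu> > 0\<close> by (auto simp: s_def strictly_feasible_def divide_pos_neg)
  ultimately show ?thesis
    using strictly_feasible_imp_feasible[OF sf] by (simp add: central_def q_def)
qed

lemma central_weighted_length:
  assumes "central \<mu> s q u1 u2 w"
  shows "(\<Sum>k<m. l k * s k) = real m * \<mu> + dual_obj n f w / 2"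
proof -
  have eq: "equilibrium s q" using assms by (simp add: central_def)
  have "l k * s k = \<mu> + s k * Bu u1 u2 k + 1/2 * (q k * Dw w k)" if k: "k < m" for k
  proof -
    have mu: "s k * (- constraint u1 u2 w k) = \<mu>" and q: "q k = 1/2 * s k * Dw w k / l k"
      using assms k by (simp_all add: central_def)
    have "l k * s k = s k * (- constraint u1 u2 w k) + s k * Bu u1 u2 k + s k * (Dw w k)\<^sup>2 / (4 * l k)"
      by (simp add: constraint_def algebra_simps)
    also have "\<dots> = \<mu> + s k * Bu u1 u2 k + 1/2 * (q k * Dw w k)"
      unfolding mu q using len_pos[OF k] by (simp add: field_simps power2_eq_square)
    finally show ?thesis .
  qed
  then have "(\<Sum>k<m. l k * s k) = (\<Sum>k<m. \<mu> + s k * Bu u1 u2 k + 1/2 * (q k * Dw w k))"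
    by (intro sum.cong) auto
  also have "\<dots> = real m * \<mu> + (\<Sum>k<m. s k * Bu u1 u2 k) + 1/2 * (\<Sum>k<m. q k * Dw w k)"
    by (simp add: sum.distrib sum_distrib_left)
  finally show ?thesis
    using sum_stress_Bu_eq_0[OF eq] dual_obj_eq_sum[OF eq] by simp
qed

lemma central_limit_imp_KKT:
  assumes central: "\<And>j. central (\<mu> j) (S j) (Q j) (U j) (V j) (W j)" and "\<mu> \<longlonglongrightarrow> 0"
    and S: "\<And>k. k < m \<Longrightarrow> (\<lambda>j. S j k) \<longlonglongrightarrow> s k"
    and U: "\<And>i. i < n \<Longrightarrow> (\<lambda>j. U j i) \<longlonglongrightarrow> a1 i" "\<And>i. i < n \<Longrightarrow> (\<lambda>j. V j i) \<longlonglongrightarrow> a2 i"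
      "\<And>i. i < n \<Longrightarrow> (\<lambda>j. W j i) \<longlonglongrightarrow> aw i"
  shows "KKT s (\<lambda>k. 1/2 * s k * Dw aw k / l k) a1 a2 aw"
proof -
  define q where "q = (\<lambda>k. 1/2 * s k * Dw aw k / l k)"
  note constraint_lim = tendsto_constraint[OF _ U]
  have Q: "(\<lambda>j. Q j k) \<longlonglongrightarrow> q k" if k: "k < m" for k
  proof -
    have "(\<lambda>j. 1/2 * S j k * Dw (W j) k / l k) \<longlonglongrightarrow> q k"
      unfolding q_def using len_pos[OF k] by (intro tendsto_intros tendsto_mv S k U(3)) auto
    moreover have "Q j k = 1/2 * S j k * Dw (W j) k / l k" for j
      using central[of j] k by (simp add: central_def)
    ultimately show ?thesis by simp
  qed
  have "s k \<ge> 0" if k: "k < m" for k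
    using central k by (intro LIMSEQ_le_const[OF S[OF k]]) (auto simp: central_def less_imp_le)
  moreover have "feasible a1 a2 aw"
    unfolding feasible_def
  proof (intro allI impI)
    fix k assume k: "k < m"
    show "constraint a1 a2 aw k \<le> 0"
      using central k by (intro LIMSEQ_le_const2[OF constraint_lim[OF k]]) (auto simp: central_def feasible_def)
  qed
  moreover have "equilibrium s q"
    unfolding equilibrium_def
  proof (intro allI impI conjI)
    fix i assume "i < n"
    have "tmv B1 m (S j) i = 0" "tmv B2 m (S j) i = 0" "tmv D m (Q j) i = f i" for j
      using central[of j] \<open>i < n\<close> by (simp_all add: central_def equilibrium_def)
    then have "(\<lambda>j. tmv B1 m (S j) i) \<longlonglongrightarrow> 0" "(\<lambda>j. tmv B2 m (S j) i) \<longlonglongrightarrow> 0"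
      "(\<lambda>j. tmv D m (Q j) i) \<longlonglongrightarrow> f i"
      by simp_all
    moreover have "(\<lambda>j. tmv B1 m (S j) i) \<longlonglongrightarrow> tmv B1 m s i" "(\<lambda>j. tmv B2 m (S j) i) \<longlonglongrightarrow> tmv B2 m s i"
      "(\<lambda>j. tmv D m (Q j) i) \<longlonglongrightarrow> tmv D m q i"
      using S Q by (simp_all add: tendsto_tmv)
    ultimately show "tmv B1 m s i = 0" "tmv B2 m s i = 0" "tmv D m q i = f i"
      using LIMSEQ_unique by blast+
  qed
  moreover have "constraint a1 a2 aw k = 0" if k: "k < m" and "s k \<noteq> 0" for k
  proof -
    have "(\<lambda>j. S j k * (- constraint (U j) (V j) (W j) k)) \<longlonglongrightarrow> s k * (- constraint a1 a2 aw k)"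
      by (intro tendsto_intros S k constraint_lim)
    moreover have "S j k * (- constraint (U j) (V j) (W j) k) = \<mu> j" for j
      using central[of j] k by (simp add: central_def)
    ultimately have "\<mu> \<longlonglongrightarrow> s k * (- constraint a1 a2 aw k)" by simp
    then have "s k * (- constraint a1 a2 aw k) = 0"
      using \<open>\<mu> \<longlonglongrightarrow> 0\<close> by (rule LIMSEQ_unique)
    then show ?thesis using \<open>s k \<noteq> 0\<close> by simp
  qed
  ultimately show ?thesis
    unfolding KKT_def q_def by simp
qed

end

locale bounded_discrete_problem = discrete_problem +
  assumes feasible_bounded:
    "\<exists>R. \<forall>u1 u2 w. feasible u1 u2 w \<longrightarrow> (\<forall>i<n. \<bar>u1 i\<bar> \<le> R \<and> \<bar>u2 i\<bar> \<le> R \<and> \<bar>w i\<bar> \<le> R)"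
begin

lemma feasible_convergent_subseq:
  fixes U1 U2 W :: "nat \<Rightarrow> nat \<Rightarrow> real"
  assumes "\<And>j. feasible (U1 j) (U2 j) (W j)"
  obtains r a1 a2 aw where "strict_mono r"
    and "\<And>i. i < n \<Longrightarrow> (\<lambda>j. U1 (r j) i) \<longlonglongrightarrow> a1 i" "\<And>i. i < n \<Longrightarrow> (\<lambda>j. U2 (r j) i) \<longlonglongrightarrow> a2 i"
      "\<And>i. i < n \<Longrightarrow> (\<lambda>j. W (r j) i) \<longlonglongrightarrow> aw i"
proof -
  obtain R where R: "\<And>u1 u2 w i. feasible u1 u2 w \<Longrightarrow> i < n \<Longrightarrow> \<bar>u1 i\<bar> \<le> R \<and> \<bar>u2 i\<bar> \<le> R \<and> \<bar>w i\<bar> \<le> R"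
    using feasible_bounded by blast
  have bnd: "bounded (range (\<lambda>j. (U1 j i, U2 j i, W j i)))" if "i \<in> {..<n}" for i
  proof (rule bounded_subset)
    show "bounded ({-R..R} \<times> {-R..R} \<times> {-R..R})"
      by (intro bounded_Times bounded_closed_interval)
    show "range (\<lambda>j. (U1 j i, U2 j i, W j i)) \<subseteq> {-R..R} \<times> {-R..R} \<times> {-R..R}"
    proof -
      have "(U1 j i, U2 j i, W j i) \<in> {-R..R} \<times> {-R..R} \<times> {-R..R}" for j
        using R[OF assms[of j], of i] that by (auto simp: abs_le_iff)
      then show ?thesis by auto
    qed
  qed
  obtain r a where r: "strict_mono r"
    and lim: "\<And>i. i \<in> {..<n} \<Longrightarrow> (\<lambda>j. (U1 (r j) i, U2 (r j) i, W (r j) i)) \<longlonglongrightarrow> a i"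
    by (rule bounded_coordinates_imp_convergent_subseq[where x = "\<lambda>j i. (U1 j i, U2 j i, W j i)",
          OF finite_lessThan bnd]) auto
  show thesis
  proof (rule that[OF r])
    fix i assume "i < n"
    then show "(\<lambda>j. U1 (r j) i) \<longlonglongrightarrow> fst (a i)" "(\<lambda>j. U2 (r j) i) \<longlonglongrightarrow> fst (snd (a i))"
      "(\<lambda>j. W (r j) i) \<longlonglongrightarrow> snd (snd (a i))"
      using tendsto_fst[OF lim] tendsto_snd[OF tendsto_snd[OF lim]] tendsto_fst[OF tendsto_snd[OF lim]]
      by auto
  qed
qed

lemma dual_obj_bounded:
  obtains C where "\<And>u1 u2 w. feasible u1 u2 w \<Longrightarrow> dual_obj n f w \<le> C"
proof -
  obtain R where R: "\<And>u1 u2 w i. feasible u1 u2 w \<Longrightarrow> i < n \<Longrightarrow> \<bar>w i\<bar> \<le> R"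
    using feasible_bounded by blast
  have "dual_obj n f w \<le> (\<Sum>i<n. \<bar>f i\<bar> * R)" if "feasible u1 u2 w" for u1 u2 w
    unfolding dual_obj_def
  proof (rule sum_mono)
    fix i assume "i \<in> {..<n}"
    then have "f i * w i \<le> \<bar>f i\<bar> * \<bar>w i\<bar>" "\<bar>w i\<bar> \<le> R" using R[OF that] by (auto simp: abs_mult[symmetric])
    then show "f i * w i \<le> \<bar>f i\<bar> * R" by (meson abs_ge_zero mult_left_mono order_trans)
  qed
  then show thesis using that by blast
qed

lemma sum_ln_neg_constraint_bounded:
  obtains L where "\<And>u1 u2 w A. strictly_feasible u1 u2 w \<Longrightarrow> A \<subseteq> {..<m} \<Longrightarrow>
    (\<Sum>k\<in>A. ln (- constraint u1 u2 w k)) \<le> L"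
proof -
  obtain R where R: "\<And>u1 u2 w i. feasible u1 u2 w \<Longrightarrow> i < n \<Longrightarrow> \<bar>u1 i\<bar> \<le> R \<and> \<bar>u2 i\<bar> \<le> R"
    using feasible_bounded by blast
  define T where "T k = l k + (\<Sum>i<n. \<bar>B1 k i\<bar>) * R + (\<Sum>i<n. \<bar>B2 k i\<bar>) * R" for k
  define K where "K = 1 + (\<Sum>k<m. \<bar>T k\<bar>)"
  have K: "- constraint u1 u2 w k \<le> K" if "feasible u1 u2 w" "k < m" for u1 u2 w k
  proof -
    have "- constraint u1 u2 w k \<le> l k - Bu u1 u2 k"
      using len_pos[OF that(2)] by (simp add: constraint_def)
    also have "\<dots> \<le> T k"
      using abs_mv_le[of n u1 R B1 k] abs_mv_le[of n u2 R B2 k] R[OF that(1)]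
      unfolding T_def Bu_def by (smt (verit))
    also have "\<dots> \<le> K"
      using member_le_sum[of k "{..<m}" "\<lambda>k. \<bar>T k\<bar>"] that(2) by (simp add: K_def)
    finally show ?thesis .
  qed
  have "1 \<le> K" by (simp add: K_def sum_nonneg)
  have "(\<Sum>k\<in>A. ln (- constraint u1 u2 w k)) \<le> real m * ln K"
    if sf: "strictly_feasible u1 u2 w" and A: "A \<subseteq> {..<m}" for u1 u2 w A
  proof -
    have "(\<Sum>k\<in>A. ln (- constraint u1 u2 w k)) \<le> real (card A) * ln K"
    proof (rule sum_bounded_above)
      fix k assume "k \<in> A"
      then have "k < m" using A by auto
      then have "0 < - constraint u1 u2 w k" "- constraint u1 u2 w k \<le> K"
        using sf K[OF strictly_feasible_imp_feasible[OF sf]] by (auto simp: strictly_feasible_def)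
      then show "ln (- constraint u1 u2 w k) \<le> ln K" by simp
    qed
    also have "\<dots> \<le> real m * ln K"
      using card_mono[OF _ A] \<open>1 \<le> K\<close> by (intro mult_right_mono) auto
    finally show ?thesis .
  qed
  then show thesis using that by blast
qed

lemma barrier_bounds:
  assumes "\<mu> > 0"
  obtains \<Phi> where "\<And>u1 u2 w. strictly_feasible u1 u2 w \<Longrightarrow> barrier \<mu> u1 u2 w \<le> \<Phi>"
    and "\<And>c. \<exists>\<delta>>0. \<forall>u1 u2 w k. strictly_feasible u1 u2 w \<and> barrier \<mu> u1 u2 w \<ge> c \<and> k < m
           \<longrightarrow> - constraint u1 u2 w k \<ge> \<delta>"
proof -
  obtain C where C: "\<And>u1 u2 w. feasible u1 u2 w \<Longrightarrow> dual_obj n f w \<le> C"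
    using dual_obj_bounded by blast
  obtain L where L: "\<And>u1 u2 w A. strictly_feasible u1 u2 w \<Longrightarrow> A \<subseteq> {..<m} \<Longrightarrow>
      (\<Sum>k\<in>A. ln (- constraint u1 u2 w k)) \<le> L"
    using sum_ln_neg_constraint_bounded by blast
  have upper: "barrier \<mu> u1 u2 w \<le> C + \<mu> * L" if sf: "strictly_feasible u1 u2 w" for u1 u2 w
  proof -
    have "\<mu> * (\<Sum>k<m. ln (- constraint u1 u2 w k)) \<le> \<mu> * L"
      using L[OF sf, of "{..<m}"] \<open>\<mu> > 0\<close> by simp
    then show ?thesis
      using C[OF strictly_feasible_imp_feasible[OF sf]] unfolding barrier_def by linarith
  qed
  have "\<exists>\<delta>>0. \<forall>u1 u2 w k. strictly_feasible u1 u2 w \<and> barrier \<mu> u1 u2 w \<ge> c \<and> k < m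
           \<longrightarrow> - constraint u1 u2 w k \<ge> \<delta>" for c
  proof (intro exI conjI allI impI)
    show "exp ((c - C) / \<mu> - L) > 0" by simp
    fix u1 u2 w k
    assume "strictly_feasible u1 u2 w \<and> barrier \<mu> u1 u2 w \<ge> c \<and> k < m"
    then have sf: "strictly_feasible u1 u2 w" and "barrier \<mu> u1 u2 w \<ge> c" and k: "k < m" by auto
    have pos: "- constraint u1 u2 w k > 0" using sf k by (simp add: strictly_feasible_def)
    have "(\<Sum>k'<m. ln (- constraint u1 u2 w k'))
        = ln (- constraint u1 u2 w k) + (\<Sum>k'\<in>{..<m} - {k}. ln (- constraint u1 u2 w k'))"
      using k by (simp add: sum.remove)
    also have "\<dots> \<le> ln (- constraint u1 u2 w k) + L"
      using L[OF sf, of "{..<m} - {k}"] by auto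
    finally have "\<mu> * (\<Sum>k'<m. ln (- constraint u1 u2 w k')) \<le> \<mu> * (ln (- constraint u1 u2 w k) + L)"
      using \<open>\<mu> > 0\<close> by simp
    then have "c \<le> C + \<mu> * (ln (- constraint u1 u2 w k) + L)"
      using \<open>barrier \<mu> u1 u2 w \<ge> c\<close> C[OF strictly_feasible_imp_feasible[OF sf]]
      unfolding barrier_def by linarith
    then have "(c - C) / \<mu> - L \<le> ln (- constraint u1 u2 w k)"
      using \<open>\<mu> > 0\<close> by (simp add: field_simps)
    then show "exp ((c - C) / \<mu> - L) \<le> - constraint u1 u2 w k"
      using pos by (metis exp_le_cancel_iff exp_ln)
  qed
  with upper show thesis using that by blast
qed

text \<open>The barrier is bounded above on the strictly feasible set, and a maximising sequence stays
  a fixed distance inside it; a convergent subsequence therefore has a strictly feasible limit,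
  at which the barrier is continuous.\<close>
lemma barrier_attains_max:
  assumes "\<mu> > 0"
  obtains a1 a2 aw where "strictly_feasible a1 a2 aw"
    and "\<And>v1 v2 z. strictly_feasible v1 v2 z \<Longrightarrow> barrier \<mu> v1 v2 z \<le> barrier \<mu> a1 a2 aw"
proof -
  obtain \<Phi> where upper: "\<And>u1 u2 w. strictly_feasible u1 u2 w \<Longrightarrow> barrier \<mu> u1 u2 w \<le> \<Phi>"
    and inner: "\<And>c. \<exists>\<delta>>0. \<forall>u1 u2 w k. strictly_feasible u1 u2 w \<and> barrier \<mu> u1 u2 w \<ge> c \<and> k < m
           \<longrightarrow> - constraint u1 u2 w k \<ge> \<delta>"
    using barrier_bounds[OF assms] by blast
  define P where "P = {barrier \<mu> u1 u2 w | u1 u2 w. strictly_feasible u1 u2 w}"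
  define \<sigma> where "\<sigma> = Sup P"
  define \<phi>0 where "\<phi>0 = barrier \<mu> (\<lambda>_. 0) (\<lambda>_. 0) (\<lambda>_. 0)"
  have P: "P \<noteq> {}" "bdd_above P" "\<phi>0 \<in> P"
    using upper strictly_feasible_zero by (auto simp: P_def \<phi>0_def bdd_above_def)
  have "\<exists>u1 u2 w. strictly_feasible u1 u2 w \<and> \<sigma> - inverse (real (Suc j)) < barrier \<mu> u1 u2 w" for j
  proof -
    have "\<sigma> - inverse (real (Suc j)) < \<sigma>" by simp
    then have "\<exists>x\<in>P. \<sigma> - inverse (real (Suc j)) < x"
      unfolding \<sigma>_def using less_cSup_iff[OF P(1,2)] by blast
    then show ?thesis by (auto simp: P_def)
  qed
  then obtain V1 V2 W where sf: "\<And>j. strictly_feasible (V1 j) (V2 j) (W j)"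
    and near: "\<And>j. \<sigma> - inverse (real (Suc j)) < barrier \<mu> (V1 j) (V2 j) (W j)"
    by metis
  obtain \<delta> where "\<delta> > 0" and \<delta>: "\<And>u1 u2 w k. strictly_feasible u1 u2 w \<Longrightarrow>
      barrier \<mu> u1 u2 w \<ge> \<phi>0 - 1 \<Longrightarrow> k < m \<Longrightarrow> - constraint u1 u2 w k \<ge> \<delta>"
    using inner[of "\<phi>0 - 1"] by blast
  have "\<phi>0 \<le> \<sigma>" unfolding \<sigma>_def using P by (simp add: cSup_upper)
  moreover have "inverse (real (Suc j)) \<le> 1" for j by (simp add: inverse_le_1_iff)
  ultimately have "barrier \<mu> (V1 j) (V2 j) (W j) \<ge> \<phi>0 - 1" for j
    using near[of j] by (meson add_le_cancel_left diff_le_eq order.strict_implies_order order_trans)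
  then have deep: "- constraint (V1 j) (V2 j) (W j) k \<ge> \<delta>" if "k < m" for j k
    using \<delta>[OF sf] that by blast
  obtain r a1 a2 aw where "strict_mono r"
    and lim: "\<And>i. i < n \<Longrightarrow> (\<lambda>j. V1 (r j) i) \<longlonglongrightarrow> a1 i" "\<And>i. i < n \<Longrightarrow> (\<lambda>j. V2 (r j) i) \<longlonglongrightarrow> a2 i"
      "\<And>i. i < n \<Longrightarrow> (\<lambda>j. W (r j) i) \<longlonglongrightarrow> aw i"
    using feasible_convergent_subseq[of "\<lambda>j. V1 j" "\<lambda>j. V2 j" W] sf strictly_feasible_imp_feasible
    by blast
  have "- constraint a1 a2 aw k \<ge> \<delta>" if k: "k < m" for k
    using deep[OF k] by (intro LIMSEQ_le_const[OF tendsto_minus[OF tendsto_constraint[OF k lim]]]) auto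
  then have sf_a: "strictly_feasible a1 a2 aw"
    using \<open>\<delta> > 0\<close> unfolding strictly_feasible_def by (meson neg_0_less_iff_less order_less_le_trans)
  have "(\<lambda>j. \<sigma> - inverse (real (Suc (r j)))) \<longlonglongrightarrow> \<sigma> - 0"
    using LIMSEQ_subseq_LIMSEQ[OF LIMSEQ_inverse_real_of_nat \<open>strict_mono r\<close>]
    by (intro tendsto_intros) (simp add: o_def)
  moreover have "\<sigma> - inverse (real (Suc (r j))) \<le> barrier \<mu> (V1 (r j)) (V2 (r j)) (W (r j))" for j
    using near[of "r j"] by simp
  ultimately have "\<sigma> \<le> barrier \<mu> a1 a2 aw"
    using LIMSEQ_le[OF _ tendsto_barrier[OF lim sf_a]] by auto
  moreover have "barrier \<mu> v1 v2 z \<le> \<sigma>" if "strictly_feasible v1 v2 z" for v1 v2 z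
    unfolding \<sigma>_def using P(2) that by (auto simp: P_def intro: cSup_upper)
  ultimately show thesis
    using that[OF sf_a] by (meson order_trans)
qed

lemma central_exists:
  assumes "\<mu> > 0"
  shows "\<exists>s q u1 u2 w. central \<mu> s q u1 u2 w"
proof -
  obtain a1 a2 aw where "strictly_feasible a1 a2 aw"
    and "\<And>v1 v2 z. strictly_feasible v1 v2 z \<Longrightarrow> barrier \<mu> v1 v2 z \<le> barrier \<mu> a1 a2 aw"
    using barrier_attains_max[OF assms] by blast
  from barrier_max_imp_central[OF assms this] show ?thesis by blast
qed

lemma KKT_exists: "\<exists>s q u1 u2 w. KKT s q u1 u2 w"
proof -
  define \<mu> where "\<mu> j = inverse (real (Suc j))" for j
  have "\<exists>s q u1 u2 w. central (\<mu> j) s q u1 u2 w" for j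
    by (rule central_exists) (simp add: \<mu>_def)
  then obtain S Q U1 U2 W where central: "\<And>j. central (\<mu> j) (S j) (Q j) (U1 j) (U2 j) (W j)"
    by metis
  then have feasible: "\<And>j. feasible (U1 j) (U2 j) (W j)" by (simp add: central_def)
  obtain C where C: "\<And>u1 u2 w. feasible u1 u2 w \<Longrightarrow> dual_obj n f w \<le> C"
    using dual_obj_bounded by blast
  have S_bound: "\<bar>S j k\<bar> \<le> (real m + C / 2) / l k" if k: "k < m" for j k
  proof -
    have pos: "\<forall>k<m. S j k > 0" using central[of j] by (simp add: central_def)
    have "l k * S j k \<le> (\<Sum>k<m. l k * S j k)"
      using pos len_pos k by (intro member_le_sum) (auto intro: less_imp_le)
    also have "\<dots> = real m * \<mu> j + dual_obj n f (W j) / 2"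
      by (rule central_weighted_length[OF central])
    also have "\<dots> \<le> real m + C / 2"
    proof -
      have "\<mu> j \<le> 1" by (simp add: \<mu>_def inverse_le_1_iff)
      then have "real m * \<mu> j \<le> real m" by (simp add: mult_left_le)
      then show ?thesis using C[OF feasible[of j]] by simp
    qed
    finally have "S j k \<le> (real m + C / 2) / l k"
      using len_pos[OF k] by (simp add: pos_le_divide_eq mult.commute)
    then show ?thesis using pos[rule_format, OF k] by simp
  qed
  obtain r a1 a2 aw where "strict_mono r"
    and lim: "\<And>i. i < n \<Longrightarrow> (\<lambda>j. U1 (r j) i) \<longlonglongrightarrow> a1 i" "\<And>i. i < n \<Longrightarrow> (\<lambda>j. U2 (r j) i) \<longlonglongrightarrow> a2 i"
      "\<And>i. i < n \<Longrightarrow> (\<lambda>j. W (r j) i) \<longlonglongrightarrow> aw i"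
    using feasible_convergent_subseq[of "\<lambda>j. U1 j" "\<lambda>j. U2 j" W] feasible by blast
  have "bounded (range (\<lambda>j. S (r j) k))" if "k \<in> {..<m}" for k
    using S_bound that by (intro boundedI[of _ "(real m + C / 2) / l k"]) auto
  then obtain r' s where "strict_mono r'" and S: "\<And>k. k \<in> {..<m} \<Longrightarrow> (\<lambda>j. S (r (r' j)) k) \<longlonglongrightarrow> s k"
    by (rule bounded_coordinates_imp_convergent_subseq[where x = "\<lambda>j k. S (r j) k", OF finite_lessThan]) auto
  have sub: "(\<lambda>j. X (r' j)) \<longlonglongrightarrow> L" if "X \<longlonglongrightarrow> L" for X :: "nat \<Rightarrow> real" and L
    using LIMSEQ_subseq_LIMSEQ[OF that \<open>strict_mono r'\<close>] by (simp add: o_def)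
  have "(\<lambda>j. \<mu> (r j)) \<longlonglongrightarrow> 0"
    using LIMSEQ_subseq_LIMSEQ[OF LIMSEQ_inverse_real_of_nat \<open>strict_mono r\<close>] by (simp add: \<mu>_def o_def)
  then have "KKT s (\<lambda>k. 1/2 * s k * Dw aw k / l k) a1 a2 aw"
    by (intro central_limit_imp_KKT[where \<mu> = "\<lambda>j. \<mu> (r (r' j))" and S = "\<lambda>j. S (r (r' j))"
          and Q = "\<lambda>j. Q (r (r' j))" and U = "\<lambda>j. U1 (r (r' j))" and V = "\<lambda>j. U2 (r (r' j))"
          and W = "\<lambda>j. W (r (r' j))"] central sub S lim)
      auto
  then show ?thesis by blast
qed

end

lemma bounded_discrete_problem_if_interior:
  fixes \<Omega> X :: "(real^2) set"
  assumes X: "finite X"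
    and Xint: "X - frontier \<Omega> \<subseteq> interior (convex hull (X \<inter> frontier \<Omega>))"
    and chi: "bij_betw chi {..<n} (X - frontier \<Omega>)"
    and pairs: "bij_betw (\<lambda>k. {cm k, cp k}) {..<m} {{a, b} | a b. a \<in> X \<and> b \<in> X \<and> a \<noteq> b}"
  shows "bounded_discrete_problem n m chi cm cp"
proof -
  have pairs_image: "(\<lambda>k. {cm k, cp k}) ` {..<m} = {{a, b} | a b. a \<in> X \<and> b \<in> X \<and> a \<noteq> b}"
    using pairs by (simp add: bij_betw_def)
  have inj: "inj_on chi {..<n}" and chi_image: "chi ` {..<n} = X - frontier \<Omega>"
    using chi by (simp_all add: bij_betw_def)
  have "discrete_problem m cm cp"
  proof
    fix k assume "k < m"
    then obtain a b where "{cm k, cp k} = {a, b}" "a \<noteq> b" using pairs_image by blast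
    then show "len cm cp k > 0" by (rule len_pos_if_distinct)
  qed
  then interpret discrete_problem n m chi cm cp f .
  have edges: "\<exists>k<m. {cm k, cp k} = {chi i, b}" if "i < n" "b \<in> X \<inter> frontier \<Omega>" for i b
  proof -
    have "{chi i, b} \<in> (\<lambda>k. {cm k, cp k}) ` {..<m}"
      unfolding pairs_image using that chi_image by blast
    then show ?thesis by (auto simp: eq_commute)
  qed
  have boundary: "finite (X \<inter> frontier \<Omega>)" "(X \<inter> frontier \<Omega>) \<inter> chi ` {..<n} = {}"
    "chi ` {..<n} \<subseteq> interior (convex hull (X \<inter> frontier \<Omega>))"
    using X Xint chi_image by auto
  show ?thesis
    by unfold_locales (rule feasible_bounded_if_interior[OF inj boundary edges])
qed

theorem theorem6p1:
  fixes \<Omega> X :: "(real^2) set"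
    and n m :: nat
    and chi cm cp :: "nat \<Rightarrow> real^2"
    and f :: "nat \<Rightarrow> real"
  assumes dom: "open \<Omega>" "connected \<Omega>" "bounded \<Omega>" "\<Omega> \<noteq> {}"
    and X: "finite X" "X \<subseteq> closure \<Omega>"
    and Xint: "X - frontier \<Omega> \<subseteq> interior (convex hull (X \<inter> frontier \<Omega>))"
    and chi: "bij_betw chi {..<n} (X - frontier \<Omega>)"
    and pairs: "bij_betw (\<lambda>k. {cm k, cp k}) {..<m} {{a, b} | a b. a \<in> X \<and> b \<in> X \<and> a \<noteq> b}"
  shows "(\<exists>Z. (\<exists>s r q. primal_sol n m chi cm cp f s r q \<and> primal_obj m cm cp s r = Z) \<and>
              (\<exists>u1 u2 w t1 t2 t3. dual_sol n m chi cm cp f u1 u2 w t1 t2 t3 \<and> dual_obj n f w = Z))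
     \<and> (\<forall>s q u1 u2 w. (\<forall>k<m. s k \<ge> 0) \<longrightarrow>
          (((\<exists>r. primal_sol n m chi cm cp f s r q) \<and>
            (\<exists>t1 t2 t3. dual_sol n m chi cm cp f u1 u2 w t1 t2 t3))
           \<longleftrightarrow>
           ((\<forall>k<m. (1/4) * (mv (Dmat chi cm cp) n w k)\<^sup>2 / len cm cp k
                      + (mv (B1mat chi cm cp) n u1 k + mv (B2mat chi cm cp) n u2 k) \<le> len cm cp k) \<and>
            (\<forall>i<n. tmv (B1mat chi cm cp) m s i = 0 \<and> tmv (B2mat chi cm cp) m s i = 0 \<and>
                   tmv (Dmat chi cm cp) m q i = f i) \<and>
            (\<forall>k<m. s k \<noteq> 0 \<longrightarrow> (1/4) * (mv (Dmat chi cm cp) n w k)\<^sup>2 / len cm cp k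
                      + (mv (B1mat chi cm cp) n u1 k + mv (B2mat chi cm cp) n u2 k) = len cm cp k) \<and>
            (\<forall>k<m. q k = (1/2) * s k * mv (Dmat chi cm cp) n w k / len cm cp k))))"
proof -
  interpret bounded_discrete_problem n m chi cm cp f
    using bounded_discrete_problem_if_interior[OF X(1) Xint chi pairs] .
  obtain s0 q0 u10 u20 w0 where KKT0: "KKT s0 q0 u10 u20 w0"
    using KKT_exists by blast
  have "\<exists>Z. (\<exists>s r q. primal_sol n m chi cm cp f s r q \<and> primal_obj m cm cp s r = Z) \<and>
      (\<exists>u1 u2 w t1 t2 t3. dual_sol n m chi cm cp f u1 u2 w t1 t2 t3 \<and> dual_obj n f w = Z)"
    using KKT_imp_optimal[OF KKT0] KKT_imp_zero_gap[OF KKT0] by (intro exI[of _ "dual_obj n f w0"] conjI exI) auto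
  then show ?thesis
    by (simp add: solutions_iff_KKT[OF KKT0] KKT_iff_conditions)
qed

end
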